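(* For an integer $k \geq 1$ let $X^{(k)}, X^{(k)}_1, X^{(k)}_2, \ldots$ be i.i.d.\ random variables with $\mathbb{P}\{X^{(k)} = 2^i\} = \frac{2^{-i}}{1-2^{-k}}$ for $i = 1, \ldots, k$, and let $S^{(k)}_n = X^{(k)}_1 + \cdots + X^{(k)}_n$. For $n \geq 1$ let $\gamma_n = n / 2^{\lceil \log_2 n\rceil} \in (1/2,1]$. For $x \geq 0$ put \[ h(x) = (2+x)\ln\left(1 + \frac{x}{2}\right) - x. \] Then for any $n \geq 1$, any integer $j \geq 1 - \lceil \log_2 n \rceil$ and any $x \geq 0$, \[ \mathbb{P}\left\{ S_n^{(\lceil \log_2 n\rceil + j)} - \mathbb{E} S_n^{(\lceil \log_2 n\rceil + j)} > n x \right\} \leq e^{-h(x)/\eta_{j,\gamma_n}}, \] where $\eta_{j,\gamma} = 2^j \gamma^{-1}$.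
   Context: $X^{(k)}$ has the conditional law of a St.~Petersburg variable $X$ (with $\mathbb{P}\{X=2^i\}=2^{-i}$, $i \in \mathbb{N}$) given $X \leq 2^k$. $\lceil \cdot \rceil$ denotes the upper integer part. *)

theory Defs
  imports "HOL-Probability.Probability"
begin

definition stp_h :: "real \<Rightarrow> real" where
  "stp_h x = (2 + x) * ln (1 + x / 2) - x"

definition stp_gamma :: "nat \<Rightarrow> real" where
  "stp_gamma n = real n / 2 powr (of_int \<lceil>log 2 (real n)\<rceil>)"

definition stp_eta :: "int \<Rightarrow> real \<Rightarrow> real" where
  "stp_eta j \<gamma> = 2 powr (of_int j) / \<gamma>"

end

theory Submission imports Defs begin

text \<open>
  Bennett's inequality. All Taylor coefficients of \<open>exp u - 1 - u\<close> are nonnegative, so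
  \<open>exp (t u) - 1 - t u \<le> t\<^sup>2 (exp u - 1 - u)\<close> for \<open>0 \<le> t \<le> 1\<close>, and a variable \<open>Y\<close> with values in
  \<open>[0, b]\<close> satisfies \<open>E exp (l (Y - E Y)) \<le> exp (E Y\<^sup>2 / b\<^sup>2 (exp (l b) - 1 - l b))\<close>.
  For \<open>X\<^sup>(\<^sup>k\<^sup>)\<close> one has \<open>b = 2\<^sup>k\<close> and \<open>E Y\<^sup>2 = 2 \<cdot> 2\<^sup>k\<close>, so the Chernoff bound for the i.i.d. sum at
  the optimal parameter \<open>l = ln (1 + x/2) / 2\<^sup>k\<close> is \<open>exp (- n h(x) / 2\<^sup>k)\<close>, and
  \<open>2\<^sup>k = n \<eta>\<^sub>j\<^sub>,\<^sub>\<gamma>\<close> for \<open>\<gamma> = \<gamma>\<^sub>n\<close> and \<open>k = \<lceil>log\<^sub>2 n\<rceil> + j\<close>.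
\<close>

lemma exp_remainder_scale_le:
  fixes t a :: real
  assumes "0 \<le> t" "t \<le> 1" "0 \<le> a"
  shows "exp (t * a) - 1 - t * a \<le> t\<^sup>2 * (exp a - 1 - a)"
proof -
  have series: "exp y - 1 - y = (\<Sum>n. inverse (fact (n + 2)) * y ^ (n + 2))" for y :: real
    using exp_first_terms[of y 2] by (simp add: numeral_2_eq_2)
  have summable: "summable (\<lambda>n. inverse (fact (n + 2)) * y ^ (n + 2))" for y :: real
    using summable_ignore_initial_segment[OF summable_exp[of y], of 2] by (simp add: field_simps)
  have termwise: "inverse (fact (n + 2)) * (t * a) ^ (n + 2) \<le> t\<^sup>2 * (inverse (fact (n + 2)) * a ^ (n + 2))"
    for n
  proof -
    have "t ^ (n + 2) \<le> t\<^sup>2"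
      using assms power_decreasing[of 2 "n + 2" t] by simp
    then have "(t * a) ^ (n + 2) \<le> t\<^sup>2 * a ^ (n + 2)"
      unfolding power_mult_distrib using assms by (intro mult_right_mono) auto
    from mult_left_mono[OF this, of "inverse (fact (n + 2))"] show ?thesis
      by (simp add: mult_ac)
  qed
  have "(\<Sum>n. inverse (fact (n + 2)) * (t * a) ^ (n + 2))
        \<le> (\<Sum>n. t\<^sup>2 * (inverse (fact (n + 2)) * a ^ (n + 2)))"
    by (intro suminf_le termwise summable summable_mult)
  also have "\<dots> = t\<^sup>2 * (\<Sum>n. inverse (fact (n + 2)) * a ^ (n + 2))"
    by (rule suminf_mult[OF summable])
  finally show ?thesis
    by (simp only: series)
qed

lemma Bennett_mgf_finite_le:
  fixes y p :: "'i \<Rightarrow> real" and b l :: real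
  assumes range: "\<And>m. m \<in> S \<Longrightarrow> 0 \<le> y m \<and> y m \<le> b" and "b > 0" and "l \<ge> 0"
    and p_nonneg: "\<And>m. m \<in> S \<Longrightarrow> 0 \<le> p m" and p_sum: "sum p S = 1"
  shows "(\<Sum>m\<in>S. exp (l * (y m - (\<Sum>s\<in>S. y s * p s))) * p m)
         \<le> exp ((\<Sum>m\<in>S. (y m)\<^sup>2 * p m) / b\<^sup>2 * (exp (l * b) - 1 - l * b))"
proof -
  define \<mu> where "\<mu> = (\<Sum>m\<in>S. y m * p m)"
  define B where "B = (\<Sum>m\<in>S. (y m)\<^sup>2 * p m) / b\<^sup>2 * (exp (l * b) - 1 - l * b)"
  have pointwise: "exp (l * y m) \<le> 1 + l * y m + (y m / b)\<^sup>2 * (exp (l * b) - 1 - l * b)"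
    if "m \<in> S" for m
    using exp_remainder_scale_le[of "y m / b" "l * b"] range[OF that] \<open>b > 0\<close> \<open>l \<ge> 0\<close>
    by (simp add: mult.commute)
  have "(\<Sum>m\<in>S. exp (l * y m) * p m)
        \<le> (\<Sum>m\<in>S. (1 + l * y m + (y m / b)\<^sup>2 * (exp (l * b) - 1 - l * b)) * p m)"
    by (intro sum_mono mult_right_mono pointwise p_nonneg)
  also have "\<dots> = 1 + l * \<mu> + B"
    by (simp add: B_def \<mu>_def p_sum algebra_simps sum.distrib sum_distrib_left sum_divide_distrib
        power_divide)
  also have "\<dots> \<le> exp (l * \<mu> + B)"
    using exp_ge_add_one_self[of "l * \<mu> + B"] by linarith
  finally have mgf_uncentred: "(\<Sum>m\<in>S. exp (l * y m) * p m) \<le> exp (l * \<mu> + B)" .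
  have "(\<Sum>m\<in>S. exp (l * (y m - \<mu>)) * p m) = exp (- l * \<mu>) * (\<Sum>m\<in>S. exp (l * y m) * p m)"
    by (simp add: sum_distrib_left right_diff_distrib exp_diff exp_minus field_simps)
  also have "\<dots> \<le> exp (- l * \<mu>) * exp (l * \<mu> + B)"
    by (intro mult_left_mono mgf_uncentred) auto
  also have "\<dots> = exp B"
    by (simp flip: exp_add)
  finally show ?thesis
    by (simp only: \<mu>_def B_def)
qed

definition trunc_stp_pmf :: "nat \<Rightarrow> nat \<Rightarrow> real" where
  "trunc_stp_pmf k m = (1 / 2 ^ m) / (1 - 1 / 2 ^ k)"

definition trunc_stp_mean :: "nat \<Rightarrow> real" where
  "trunc_stp_mean k = (\<Sum>m=1..k. 2 ^ m * trunc_stp_pmf k m)"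

lemma trunc_stp_pmf_nonneg: "0 \<le> trunc_stp_pmf k m"
  by (simp add: trunc_stp_pmf_def)

lemma two_power_ge_two: "k \<ge> 1 \<Longrightarrow> (2 :: real) ^ k \<ge> 2"
  by (metis power_increasing[of 1 k "2::real"] power_one_right one_le_numeral)

lemma sum_trunc_stp_pmf:
  assumes "k \<ge> 1"
  shows "(\<Sum>m=1..k. trunc_stp_pmf k m) = 1"
proof -
  have "(\<Sum>m=1..k. trunc_stp_pmf k m) = (\<Sum>m=1..k. 1 / 2 ^ m) / (1 - 1 / 2 ^ k)"
    by (simp add: trunc_stp_pmf_def sum_divide_distrib)
  also have "(\<Sum>m=1..k. 1 / 2 ^ m :: real) = 1 - 1 / 2 ^ k"
    by (induction k) (auto simp: field_simps)
  finally show ?thesis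
    using two_power_ge_two[OF assms] by simp
qed

lemma second_moment_trunc_stp_pmf:
  assumes "k \<ge> 1"
  shows "(\<Sum>m=1..k. (2 ^ m)\<^sup>2 * trunc_stp_pmf k m) = 2 * 2 ^ k"
proof -
  have "(\<Sum>m=1..k. (2 ^ m)\<^sup>2 * trunc_stp_pmf k m) = (\<Sum>m=1..k. 2 ^ m) / (1 - 1 / 2 ^ k)"
    by (simp add: trunc_stp_pmf_def sum_divide_distrib power2_eq_square)
  also have "(\<Sum>m=1..k. 2 ^ m :: real) = 2 ^ (k + 1) - 2"
    by (induction k) (auto simp: field_simps)
  also have "(2 ^ (k + 1) - 2) / (1 - 1 / 2 ^ k) = (2 * 2 ^ k :: real)"
    using two_power_ge_two[OF assms] by (simp add: field_simps)
  finally show ?thesis .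
qed

lemma (in prob_space) AE_in_finite_law:
  fixes Y :: "'a \<Rightarrow> real" and v :: "'i \<Rightarrow> real"
  assumes Y: "Y \<in> borel_measurable M" and "inj_on v S"
    and law: "\<And>m. m \<in> S \<Longrightarrow> prob {\<omega> \<in> space M. Y \<omega> = v m} = p m"
    and p_sum: "sum p S = 1"
  shows "AE \<omega> in M. \<exists>m\<in>S. Y \<omega> = v m"
proof -
  define A where "A m = {\<omega> \<in> space M. Y \<omega> = v m}" for m
  have "finite S"
    using p_sum sum.infinite by force
  have "prob (\<Union>m\<in>S. A m) = (\<Sum>m\<in>S. prob (A m))"
  proof (rule finite_measure_finite_Union)
    show "A ` S \<subseteq> events"
      unfolding A_def using Y by auto
    show "disjoint_family_on A S"
      using \<open>inj_on v S\<close> unfolding disjoint_family_on_def A_def inj_on_def by auto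
  qed fact
  also have "\<dots> = 1"
    using law p_sum by (simp add: A_def)
  finally have "AE \<omega> in M. \<omega> \<in> (\<Union>m\<in>S. A m)"
    by (rule AE_prob_1)
  then show ?thesis
    by eventually_elim (auto simp: A_def)
qed

lemma (in prob_space) expectation_finite_law:
  fixes Y :: "'a \<Rightarrow> real" and v :: "'i \<Rightarrow> real" and f :: "real \<Rightarrow> real"
  assumes Y: "Y \<in> borel_measurable M" and "inj_on v S"
    and law: "\<And>m. m \<in> S \<Longrightarrow> prob {\<omega> \<in> space M. Y \<omega> = v m} = p m"
    and p_sum: "sum p S = 1"
    and f: "f \<in> borel_measurable borel"
  shows "integrable M (\<lambda>\<omega>. f (Y \<omega>))"
    and "expectation (\<lambda>\<omega>. f (Y \<omega>)) = (\<Sum>m\<in>S. f (v m) * p m)"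
proof -
  define A where "A m = {\<omega> \<in> space M. Y \<omega> = v m}" for m
  have A_events: "A m \<in> events" for m
    unfolding A_def using Y by auto
  have "finite S"
    using p_sum sum.infinite by force
  define g where "g \<omega> = (\<Sum>m\<in>S. f (v m) * indicator (A m) \<omega>)" for \<omega>
  have "AE \<omega> in M. \<exists>m\<in>S. Y \<omega> = v m"
    using Y \<open>inj_on v S\<close> law p_sum by (rule AE_in_finite_law)
  from this AE_space have AE_eq: "AE \<omega> in M. f (Y \<omega>) = g \<omega>"
  proof eventually_elim
    case (elim \<omega>)
    then obtain m0 where m0: "m0 \<in> S" "Y \<omega> = v m0" "\<omega> \<in> space M"
      by blast
    have "g \<omega> = (\<Sum>m\<in>S. if m = m0 then f (v m) else 0)"
      unfolding g_def using m0 \<open>inj_on v S\<close>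
      by (intro sum.cong) (auto simp: A_def indicator_def inj_on_def)
    then show ?case
      using m0 \<open>finite S\<close> by simp
  qed
  have g_integrable: "integrable M g"
    unfolding g_def using A_events
    by (auto intro!: integrable_real_indicator simp: emeasure_eq_measure)
  have fY_measurable: "(\<lambda>\<omega>. f (Y \<omega>)) \<in> borel_measurable M"
    using f Y by measurable
  show "integrable M (\<lambda>\<omega>. f (Y \<omega>))"
    using integrable_cong_AE[OF fY_measurable _ AE_eq] g_integrable by auto
  have "expectation (\<lambda>\<omega>. f (Y \<omega>)) = expectation g"
    using integral_cong_AE[OF fY_measurable _ AE_eq] g_integrable by auto
  also have "\<dots> = (\<Sum>m\<in>S. f (v m) * prob (A m))"
    unfolding g_def using A_events
    by (subst Bochner_Integration.integral_sum)
       (auto intro!: integrable_real_indicator simp: emeasure_eq_measure)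
  finally show "expectation (\<lambda>\<omega>. f (Y \<omega>)) = (\<Sum>m\<in>S. f (v m) * p m)"
    using law by (simp add: A_def)
qed

lemma (in prob_space) Chernoff_indep_sum_ge:
  fixes Z :: "'i \<Rightarrow> 'a \<Rightarrow> real"
  assumes "finite I" and indep: "indep_vars (\<lambda>_. borel) Z I" and "l > 0"
    and integrable: "\<And>i. i \<in> I \<Longrightarrow> integrable M (\<lambda>\<omega>. exp (l * Z i \<omega>))"
    and mgf: "\<And>i. i \<in> I \<Longrightarrow> expectation (\<lambda>\<omega>. exp (l * Z i \<omega>)) \<le> B"
  shows "prob {\<omega> \<in> space M. a \<le> (\<Sum>i\<in>I. Z i \<omega>)} \<le> exp (- l * a) * B ^ card I"
proof -
  have Z_measurable: "Z i \<in> borel_measurable M" if "i \<in> I" for i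
    using indep that unfolding indep_vars_def by auto
  have B_nonneg: "0 \<le> B" if "i \<in> I" for i
  proof -
    have "0 \<le> expectation (\<lambda>\<omega>. exp (l * Z i \<omega>))"
      by (simp add: integral_nonneg_AE)
    then show ?thesis
      using mgf[OF \<open>i \<in> I\<close>] by linarith
  qed
  have B_power: "ennreal B ^ card I = ennreal (B ^ card I)" and B_power_nonneg: "0 \<le> B ^ card I"
    using B_nonneg by (cases "I = {}"; force simp: ennreal_power)+
  have "ennreal (prob {\<omega> \<in> space M. a \<le> (\<Sum>i\<in>I. Z i \<omega>)})
        = emeasure M {\<omega> \<in> space M. a \<le> (\<Sum>i\<in>I. Z i \<omega>)}"
    by (simp add: emeasure_eq_measure)
  also have "\<dots> \<le> ennreal (exp (- l * a))
                   * (\<integral>\<^sup>+\<omega>. ennreal (exp (l * (\<Sum>i\<in>I. Z i \<omega>))) * indicator (space M) \<omega> \<partial>M)"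
    using Z_measurable by (intro Chernoff_ineq_nn_integral_ge \<open>l > 0\<close>) auto
  also have "(\<integral>\<^sup>+\<omega>. ennreal (exp (l * (\<Sum>i\<in>I. Z i \<omega>))) * indicator (space M) \<omega> \<partial>M)
             = (\<integral>\<^sup>+\<omega>. (\<Prod>i\<in>I. ennreal (exp (l * Z i \<omega>))) \<partial>M)"
    by (intro nn_integral_cong)
       (simp add: sum_distrib_left exp_sum \<open>finite I\<close> prod_ennreal)
  also have "\<dots> = (\<Prod>i\<in>I. \<integral>\<^sup>+\<omega>. ennreal (exp (l * Z i \<omega>)) \<partial>M)"
    by (intro indep_vars_nn_integral \<open>finite I\<close> indep_vars_compose2[OF indep]) auto
  also have "ennreal (exp (- l * a)) * \<dots> \<le> ennreal (exp (- l * a)) * (\<Prod>i\<in>I. ennreal B)"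
  proof (intro mult_left_mono prod_mono_ennreal)
    fix i assume "i \<in> I"
    then show "(\<integral>\<^sup>+\<omega>. ennreal (exp (l * Z i \<omega>)) \<partial>M) \<le> ennreal B"
      using nn_integral_eq_integral[OF integrable] mgf by (simp add: ennreal_leI)
  qed simp
  also have "ennreal (exp (- l * a)) * (\<Prod>i\<in>I. ennreal B) = ennreal (exp (- l * a) * B ^ card I)"
    by (simp add: B_power ennreal_mult')
  finally show ?thesis
    using B_power_nonneg by (simp add: ennreal_le_iff)
qed

lemma (in prob_space) trunc_stp_expectation:
  fixes Y :: "'a \<Rightarrow> real" and f :: "real \<Rightarrow> real"
  assumes "k \<ge> 1" and Y: "Y \<in> borel_measurable M"
    and law: "\<And>m. 1 \<le> m \<Longrightarrow> m \<le> k \<Longrightarrow> prob {\<omega> \<in> space M. Y \<omega> = 2 ^ m} = trunc_stp_pmf k m"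
    and f: "f \<in> borel_measurable borel"
  shows "integrable M (\<lambda>\<omega>. f (Y \<omega>))"
    and "expectation (\<lambda>\<omega>. f (Y \<omega>)) = (\<Sum>m=1..k. f (2 ^ m) * trunc_stp_pmf k m)"
proof -
  have "inj_on (\<lambda>m. 2 ^ m :: real) {1..k}"
    by (simp add: inj_on_def)
  then show "integrable M (\<lambda>\<omega>. f (Y \<omega>))"
    and "expectation (\<lambda>\<omega>. f (Y \<omega>)) = (\<Sum>m=1..k. f (2 ^ m) * trunc_stp_pmf k m)"
    using expectation_finite_law[OF Y _ _ sum_trunc_stp_pmf[OF \<open>k \<ge> 1\<close>] f] law by auto
qed

lemma (in prob_space) trunc_stp_mgf_le:
  fixes Y :: "'a \<Rightarrow> real"
  assumes "k \<ge> 1" and Y: "Y \<in> borel_measurable M"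
    and law: "\<And>m. 1 \<le> m \<Longrightarrow> m \<le> k \<Longrightarrow> prob {\<omega> \<in> space M. Y \<omega> = 2 ^ m} = trunc_stp_pmf k m"
    and "l \<ge> 0"
  shows "integrable M (\<lambda>\<omega>. exp (l * (Y \<omega> - trunc_stp_mean k)))"
    and "expectation (\<lambda>\<omega>. exp (l * (Y \<omega> - trunc_stp_mean k)))
           \<le> exp (2 / 2 ^ k * (exp (l * 2 ^ k) - 1 - l * 2 ^ k))"
proof -
  note law_expectation = trunc_stp_expectation[OF \<open>k \<ge> 1\<close> Y law, of "\<lambda>y. exp (l * (y - trunc_stp_mean k))"]
  show "integrable M (\<lambda>\<omega>. exp (l * (Y \<omega> - trunc_stp_mean k)))"
    using law_expectation by simp
  have "(\<Sum>m=1..k. exp (l * (2 ^ m - trunc_stp_mean k)) * trunc_stp_pmf k m)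
        \<le> exp ((\<Sum>m=1..k. (2 ^ m)\<^sup>2 * trunc_stp_pmf k m) / (2 ^ k)\<^sup>2 * (exp (l * 2 ^ k) - 1 - l * 2 ^ k))"
    unfolding trunc_stp_mean_def
    using \<open>l \<ge> 0\<close> sum_trunc_stp_pmf[OF \<open>k \<ge> 1\<close>]
    by (intro Bennett_mgf_finite_le) (auto simp: trunc_stp_pmf_nonneg power_increasing)
  also have "(\<Sum>m=1..k. (2 ^ m)\<^sup>2 * trunc_stp_pmf k m) / (2 ^ k)\<^sup>2 = 2 / (2 ^ k :: real)"
    by (simp only: second_moment_trunc_stp_pmf[OF \<open>k \<ge> 1\<close>]) (simp add: power2_eq_square)
  finally show "expectation (\<lambda>\<omega>. exp (l * (Y \<omega> - trunc_stp_mean k)))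
                  \<le> exp (2 / 2 ^ k * (exp (l * 2 ^ k) - 1 - l * 2 ^ k))"
    using law_expectation by simp
qed

lemma stp_h_eq_Chernoff_exponent:
  fixes x :: real
  assumes "x > -2"
  shows "stp_h x = ln (1 + x / 2) * x - 2 * (exp (ln (1 + x / 2)) - 1 - ln (1 + x / 2))"
  using assms by (simp add: stp_h_def algebra_simps)

lemma (in prob_space) trunc_stp_sum_tail_le:
  fixes X :: "'i \<Rightarrow> 'a \<Rightarrow> real"
  assumes "finite I" and "k \<ge> 1" and "x \<ge> 0"
    and indep: "indep_vars (\<lambda>_. borel) X I"
    and law: "\<And>i m. i \<in> I \<Longrightarrow> 1 \<le> m \<Longrightarrow> m \<le> k \<Longrightarrow>
                prob {\<omega> \<in> space M. X i \<omega> = 2 ^ m} = trunc_stp_pmf k m"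
  shows "prob {\<omega> \<in> space M. real (card I) * x \<le> (\<Sum>i\<in>I. X i \<omega>) - expectation (\<lambda>\<omega>. \<Sum>i\<in>I. X i \<omega>)}
         \<le> exp (- real (card I) * stp_h x / 2 ^ k)"
proof -
  define \<mu> where "\<mu> = trunc_stp_mean k"
  have X_measurable: "X i \<in> borel_measurable M" if "i \<in> I" for i
    using indep that unfolding indep_vars_def by auto
  note law_expectation = trunc_stp_expectation[OF \<open>k \<ge> 1\<close> X_measurable law, of _ "\<lambda>y. y"]
  have "expectation (\<lambda>\<omega>. \<Sum>i\<in>I. X i \<omega>) = (\<Sum>i\<in>I. \<mu>)"
    using law_expectation by (simp add: \<mu>_def trunc_stp_mean_def)
  then have centred: "(\<Sum>i\<in>I. X i \<omega>) - expectation (\<lambda>\<omega>. \<Sum>i\<in>I. X i \<omega>) = (\<Sum>i\<in>I. X i \<omega> - \<mu>)"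
    for \<omega>
    by (simp add: sum_subtractf)
  show ?thesis
  proof (cases "x = 0")
    case True
    then show ?thesis
      by (simp add: stp_h_def)
  next
    case False
    define L where "L = ln (1 + x / 2)"
    define l where "l = L / 2 ^ k"
    have "l > 0"
      using False \<open>x \<ge> 0\<close> by (simp add: l_def L_def)
    have "prob {\<omega> \<in> space M. real (card I) * x \<le> (\<Sum>i\<in>I. X i \<omega> - \<mu>)}
          \<le> exp (- l * (real (card I) * x)) * exp (2 / 2 ^ k * (exp (l * 2 ^ k) - 1 - l * 2 ^ k)) ^ card I"
      using \<open>finite I\<close> \<open>l > 0\<close> indep_vars_compose2[OF indep, of "\<lambda>_ y. y - \<mu>"]
        trunc_stp_mgf_le[OF \<open>k \<ge> 1\<close> X_measurable law]
      by (intro Chernoff_indep_sum_ge) (auto simp: \<mu>_def o_def)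
    also have "\<dots> = exp (- real (card I) * (l * x - 2 / 2 ^ k * (exp L - 1 - L)))"
      by (simp add: l_def field_simps flip: exp_of_nat_mult exp_add)
    also have "l * x - 2 / 2 ^ k * (exp L - 1 - L) = stp_h x / 2 ^ k"
      using \<open>x \<ge> 0\<close> stp_h_eq_Chernoff_exponent[of x] by (simp add: l_def L_def diff_divide_distrib)
    finally show ?thesis
      by (simp add: centred)
  qed
qed

lemma stp_eta_stp_gamma:
  assumes "n \<ge> 1" and "int k = \<lceil>log 2 (real n)\<rceil> + j"
  shows "stp_eta j (stp_gamma n) = 2 ^ k / real n"
proof -
  have "stp_eta j (stp_gamma n) = 2 powr (of_int (\<lceil>log 2 (real n)\<rceil> + j)) / real n"
    using assms(1) by (simp add: stp_eta_def stp_gamma_def powr_add)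
  also have "\<dots> = 2 ^ k / real n"
    by (simp flip: assms(2) add: powr_realpow)
  finally show ?thesis .
qed

theorem lemma1:
  fixes M :: "'a measure" and X :: "nat \<Rightarrow> 'a \<Rightarrow> real"
    and n :: nat and j :: int and x :: real and k :: nat
  assumes "prob_space M"
    and "n \<ge> 1"
    and "j \<ge> 1 - \<lceil>log 2 (real n)\<rceil>"
    and "x \<ge> 0"
    and k_def: "int k = \<lceil>log 2 (real n)\<rceil> + j"
    and rv: "\<And>i. X i \<in> borel_measurable M"
    and indep: "prob_space.indep_vars M (\<lambda>_. borel) X UNIV"
    and law: "\<And>i m. 1 \<le> m \<Longrightarrow> m \<le> k \<Longrightarrow>
       measure M {\<omega> \<in> space M. X i \<omega> = 2 ^ m} = (1 / 2 ^ m) / (1 - 1 / 2 ^ k)"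
  shows "measure M {\<omega> \<in> space M.
            (\<Sum>i=1..n. X i \<omega>) - prob_space.expectation M (\<lambda>\<omega>. \<Sum>i=1..n. X i \<omega>)
              > real n * x}
         \<le> exp (- stp_h x / stp_eta j (stp_gamma n))"
proof -
  interpret prob_space M by fact
  have "k \<ge> 1"
    using assms(3) k_def by linarith
  let ?deviation = "\<lambda>\<omega>. (\<Sum>i=1..n. X i \<omega>) - expectation (\<lambda>\<omega>. \<Sum>i=1..n. X i \<omega>)"
  have "prob {\<omega> \<in> space M. ?deviation \<omega> > real n * x} \<le> prob {\<omega> \<in> space M. real n * x \<le> ?deviation \<omega>}"
    using rv by (intro finite_measure_mono) auto
  also have "\<dots> \<le> exp (- real n * stp_h x / 2 ^ k)"
    using trunc_stp_sum_tail_le[of "{1..n}" k x X] \<open>k \<ge> 1\<close> \<open>x \<ge> 0\<close> law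
      indep_vars_subset[OF indep, of "{1..n}"]
    by (simp add: trunc_stp_pmf_def)
  also have "\<dots> = exp (- stp_h x / stp_eta j (stp_gamma n))"
    by (simp add: stp_eta_stp_gamma[OF \<open>n \<ge> 1\<close> k_def])
  finally show ?thesis .
qed

end
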